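(* Let $D$ be a square-free integer and let $N>1$ be an odd square-free composite integer such that $\gcd(N, D)=1$. Then $N$ is a $\mathcal{G}(D)$-Carmichael number if and only if $\mathcal{F}_D(q) \mid \mathcal{F}_D(N)$ for every prime $q \mid N$.
   Context: For an integer $n \ge 2$ with $\gcd(n,D)=1$, $\mathcal{F}_D(n) := n - \left(\frac{D}{n}\right)$, where $\left(\frac{D}{n}\right)$ is the Kronecker symbol. For an integer $n \ge 2$ and a square-free integer $D$: if $D \equiv 2,3 \pmod 4$, let $\mathcal{I}_n(D) = \{a + b\sqrt{D} : a,b \in \mathbb{Z}/n\mathbb{Z}\}$ and $\mathcal{G}_n(D) = \{a + b\sqrt{D} \in \mathcal{I}_n(D) : a^2 - Db^2 \equiv 1 \pmod n\}$; if $D \equiv 1 \pmod 4$, let $\omega = \frac{1+\sqrt D}{2}$, $\mathcal{I}_n(D) = \{a + b\omega : a,b \in \mathbb{Z}/n\mathbb{Z}\}$ and $\mathcal{G}_n(D) = \{a + b\omega \in \mathcal{I}_n(D) : a^2 + ab + \frac{1-D}{4} b^2 \equiv 1 \pmod n\}$; $\mathcal{I}_n(D)$ is the ring $\mathcal{O}_L/n\mathcal{O}_L$, $L=\mathbb{Q}(\sqrt D)$, and $x \equiv y \pmod n$ means equality in $\mathcal{I}_n(D)$. For an odd composite integer $N$ with $\gcd(N,D)=1$: $N$ is a $\mathcal{G}(D)$-pseudoprime to base $\alpha \in \mathcal{G}_N(D)\setminus\{1,-1\}$ if $\alpha^{\mathcal{F}_D(N)} \equiv 1 \pmod N$; $N$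 is a $\mathcal{G}(D)$-Carmichael number if it is a $\mathcal{G}(D)$-pseudoprime to every base, i.e. $\alpha^{\mathcal{F}_D(N)} \equiv 1 \pmod N$ for every $\alpha \in \mathcal{G}_N(D)$. *)

theory Defs
  imports "HOL-Number_Theory.Number_Theory" "HOL-Computational_Algebra.Squarefree"
begin

definition kronecker_prime :: "int \<Rightarrow> nat \<Rightarrow> int" where
  "kronecker_prime D p =
     (if p = 2 then (if even D then 0 else if D mod 8 = 1 \<or> D mod 8 = 7 then 1 else -1)
      else Legendre D (int p))"

definition kronecker :: "int \<Rightarrow> nat \<Rightarrow> int" where
  "kronecker D n = (\<Prod>p\<in>prime_factors n. kronecker_prime D p ^ multiplicity p n)"

definition FD :: "int \<Rightarrow> nat \<Rightarrow> int" where
  "FD D n = int n - kronecker D n"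

text \<open>A pair (a,b) stands for a + b sqrt D if D \<equiv> 2,3 mod 4, and for a + b \<omega>,
  \<omega> = (1 + sqrt D)/2, if D \<equiv> 1 mod 4 (then \<omega>^2 = \<omega> + (D-1)/4).\<close>
definition qmult :: "int \<Rightarrow> int \<times> int \<Rightarrow> int \<times> int \<Rightarrow> int \<times> int" where
  "qmult D x y = (case x of (a, b) \<Rightarrow> case y of (c, d) \<Rightarrow>
     (if D mod 4 = 1 then (a * c + b * d * ((D - 1) div 4), a * d + b * c + b * d)
      else (a * c + D * b * d, a * d + b * c)))"

definition qpow :: "int \<Rightarrow> int \<times> int \<Rightarrow> nat \<Rightarrow> int \<times> int" where
  "qpow D x k = (qmult D x ^^ k) (1, 0)"

definition qnorm :: "int \<Rightarrow> int \<times> int \<Rightarrow> int" where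
  "qnorm D x = (case x of (a, b) \<Rightarrow>
     (if D mod 4 = 1 then a^2 + a * b + ((1 - D) div 4) * b^2 else a^2 - D * b^2))"

definition qcong :: "nat \<Rightarrow> int \<times> int \<Rightarrow> int \<times> int \<Rightarrow> bool" where
  "qcong n x y = ([fst x = fst y] (mod int n) \<and> [snd x = snd y] (mod int n))"

definition G_set :: "int \<Rightarrow> nat \<Rightarrow> (int \<times> int) set" where
  "G_set D n = {(a, b). 0 \<le> a \<and> a < int n \<and> 0 \<le> b \<and> b < int n \<and>
                        [qnorm D (a, b) = 1] (mod int n)}"

definition G_carmichael :: "int \<Rightarrow> nat \<Rightarrow> bool" where
  "G_carmichael D N \<longleftrightarrow> odd N \<and> N > 1 \<and> \<not> prime N \<and> coprime (int N) D \<and>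
     (\<forall>\<alpha>\<in>G_set D N. qcong N (qpow D \<alpha> (nat (FD D N))) (1, 0))"

end

(*
  For an odd prime q not dividing D, the norm-one elements of I_q(D) form a cyclic group of
  order F_D(q) = q - (D/q). Since 2 is invertible modulo q we may work in Z[sqrt D]. There the
  Frobenius x |-> x^q is the identity if (D/q) = 1 and the conjugation if (D/q) = -1, so every
  x of norm one satisfies x^(q-1) = x^q conj(x) = 1, resp. x^(q+1) = conj(x) x = 1. An element
  of order exactly F_D(q) comes from a primitive root modulo q via sqrt D |-> r, r^2 = D, in the
  split case, and from a generator a of the multiplicative group of the field I_q(D) of order
  q^2, as a^(q-1), in the inert case. For squarefree N the Chinese remainder theorem makes
  G_N(D) the product of the G_q(D), q | N, so alpha^e = 1 on G_N(D) iff F_D(q) | e for all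
  q | N; take e = F_D(N).
*)
theory Submission
  imports Defs "HOL-Algebra.Multiplicative_Group" "HOL-Computational_Algebra.Polynomial"
begin

section \<open>Quadratic rings on coordinate pairs\<close>

text \<open>A pair \<open>(a, b)\<close> stands for \<open>a + b \<omega>\<close> in \<open>\<int>[\<omega>]\<close>, \<open>\<omega>\<^sup>2 = c\<^sub>0 + c\<^sub>1 \<omega>\<close>;
  for \<open>c\<^sub>1 = 0\<close> this is \<open>\<int>[\<surd>c\<^sub>0]\<close>, and \<open>sconj\<close> is its conjugation.\<close>

definition wmult :: "int \<Rightarrow> int \<Rightarrow> int \<times> int \<Rightarrow> int \<times> int \<Rightarrow> int \<times> int" where
  "wmult c0 c1 x y =
     (fst x * fst y + c0 * snd x * snd y, fst x * snd y + snd x * fst y + c1 * snd x * snd y)"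

definition wpow :: "int \<Rightarrow> int \<Rightarrow> int \<times> int \<Rightarrow> nat \<Rightarrow> int \<times> int" where
  "wpow c0 c1 x n = (wmult c0 c1 x ^^ n) (1, 0)"

definition wnorm :: "int \<Rightarrow> int \<Rightarrow> int \<times> int \<Rightarrow> int" where
  "wnorm c0 c1 x = fst x ^ 2 + c1 * fst x * snd x - c0 * snd x ^ 2"

definition sconj :: "int \<times> int \<Rightarrow> int \<times> int" where
  "sconj x = (fst x, - snd x)"

lemma wmult_comm: "wmult c0 c1 x y = wmult c0 c1 y x"
  by (simp add: wmult_def algebra_simps)

lemma wmult_assoc: "wmult c0 c1 (wmult c0 c1 x y) z = wmult c0 c1 x (wmult c0 c1 y z)"
  by (simp add: wmult_def algebra_simps)

lemma wmult_left_commute: "wmult c0 c1 x (wmult c0 c1 y z) = wmult c0 c1 y (wmult c0 c1 x z)"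
  by (simp add: wmult_def algebra_simps)

lemmas wmult_ac = wmult_assoc wmult_comm wmult_left_commute

lemma wmult_1 [simp]: "wmult c0 c1 x (1, 0) = x" "wmult c0 c1 (1, 0) x = x"
  by (simp_all add: wmult_def)

lemma wpow_0 [simp]: "wpow c0 c1 x 0 = (1, 0)"
  by (simp add: wpow_def)

lemma wpow_Suc: "wpow c0 c1 x (Suc n) = wmult c0 c1 x (wpow c0 c1 x n)"
  by (simp add: wpow_def)

lemma wpow_add: "wpow c0 c1 x (m + n) = wmult c0 c1 (wpow c0 c1 x m) (wpow c0 c1 x n)"
  by (induction m) (simp_all add: wpow_Suc wmult_assoc)

lemma wpow_mult: "wpow c0 c1 x (m * n) = wpow c0 c1 (wpow c0 c1 x m) n"
  by (induction n) (simp_all add: wpow_Suc wpow_add wmult_comm)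

lemma wpow_one [simp]: "wpow c0 c1 (1, 0) n = (1, 0)"
  by (induction n) (simp_all add: wpow_Suc)

lemma wnorm_wmult: "wnorm c0 c1 (wmult c0 c1 x y) = wnorm c0 c1 x * wnorm c0 c1 y"
  by (simp add: wmult_def wnorm_def power2_eq_square algebra_simps)

lemma wnorm_wpow: "wnorm c0 c1 (wpow c0 c1 x n) = wnorm c0 c1 x ^ n"
  by (induction n) (simp_all add: wpow_Suc wnorm_wmult, simp add: wnorm_def)

lemma wmult_sconj: "wmult d 0 x (sconj x) = (wnorm d 0 x, 0)"
  by (simp add: wmult_def sconj_def wnorm_def power2_eq_square)

lemma qcong_refl [simp]: "qcong n x x"
  by (simp add: qcong_def)

lemma qcong_sym: "qcong n x y \<Longrightarrow> qcong n y x"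
  by (simp add: qcong_def cong_sym_eq)

lemma qcong_trans [trans]: "qcong n x y \<Longrightarrow> qcong n y z \<Longrightarrow> qcong n x z"
  unfolding qcong_def by (blast intro: cong_trans)

lemma qcong_dvd_modulus: "qcong n x y \<Longrightarrow> k dvd n \<Longrightarrow> qcong k x y"
  unfolding qcong_def by (meson cong_dvd_modulus int_dvd_int_iff)

lemma qcong_wmult:
  "qcong n x x' \<Longrightarrow> qcong n y y' \<Longrightarrow> qcong n (wmult c0 c1 x y) (wmult c0 c1 x' y')"
  unfolding qcong_def wmult_def by (auto intro!: cong_add cong_mult)

lemma qcong_wpow: "qcong n x x' \<Longrightarrow> qcong n (wpow c0 c1 x k) (wpow c0 c1 x' k)"
  by (induction k) (simp_all add: wpow_Suc qcong_wmult)

lemma cong_wnorm: "qcong n x y \<Longrightarrow> [wnorm c0 c1 x = wnorm c0 c1 y] (mod int n)"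
  unfolding qcong_def wnorm_def by (auto intro!: cong_add cong_diff cong_mult cong_pow)

lemma qcong_wpow_1_mult:
  "qcong n (wpow c0 c1 x e) (1, 0) \<Longrightarrow> qcong n (wpow c0 c1 x (e * k)) (1, 0)"
  unfolding wpow_mult using qcong_wpow by fastforce

lemma power_add_prime:
  fixes a b :: "'a::comm_semiring_1"
  assumes "prime p"
  obtains z where "(a + b) ^ p = a ^ p + b ^ p + of_nat p * z"
proof -
  have p0: "0 < p" using assms prime_gt_0_nat by blast
  let ?t = "\<lambda>k. of_nat (p choose k) * a ^ k * b ^ (p - k) :: 'a"
  define z where "z = (\<Sum>k\<in>{1..<p}. of_nat ((p choose k) div p) * a ^ k * b ^ (p - k) :: 'a)"
  have middle: "?t k = of_nat p * (of_nat ((p choose k) div p) * a ^ k * b ^ (p - k))"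
    if "k \<in> {1..<p}" for k
  proof -
    have "p dvd p choose k" using that by (intro dvd_choose_prime assms) auto
    then show ?thesis by (metis dvd_mult_div_cancel mult.assoc of_nat_mult)
  qed
  have "{..p} = insert 0 (insert p {1..<p})" using p0 by auto
  then have "(a + b) ^ p = ?t 0 + ?t p + (\<Sum>k\<in>{1..<p}. ?t k)"
    using p0 by (simp add: binomial_ring add.assoc)
  also have "(\<Sum>k\<in>{1..<p}. ?t k) = of_nat p * z"
    by (simp add: z_def middle sum_distrib_left)
  finally have "(a + b) ^ p = a ^ p + b ^ p + of_nat p * z" by (simp add: add.commute)
  then show ?thesis by (rule that)
qed

lemma fermat_little_int:
  assumes p: "prime p"
  shows "[a ^ p = a] (mod int p)"
proof -
  have nat_case: "[int k ^ p = int k] (mod int p)" for k :: nat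
  proof (induction k)
    case 0
    then show ?case using p prime_gt_0_nat by (simp add: power_0_left)
  next
    case (Suc k)
    obtain z :: int where "(int k + 1) ^ p = int k ^ p + 1 ^ p + int p * z"
      using power_add_prime[OF p] by metis
    then have "[int (Suc k) ^ p = int k ^ p + 1] (mod int p)"
      by (simp add: cong_iff_dvd_diff add.commute)
    also have "[int k ^ p + 1 = int (Suc k)] (mod int p)"
      using Suc.IH by (simp add: cong_add_rcancel_0 cong_add add.commute)
    finally show ?case .
  qed
  have "[a = int (nat (a mod int p))] (mod int p)"
    using p prime_gt_0_nat by (simp add: cong_def)
  then show ?thesis using nat_case by (meson cong_pow cong_sym cong_trans)
qed

lemma fermat_theorem_int:
  assumes p: "prime p" and a: "\<not> int p dvd a"
  shows "[a ^ (p - 1) = 1] (mod int p)"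
proof -
  have "coprime a (int p)"
    using a p by (metis coprime_commute prime_imp_coprime prime_nat_int_transfer)
  moreover have "[a * a ^ (p - 1) = a * 1] (mod int p)"
    using fermat_little_int[OF p, of a] p prime_gt_0_nat by (simp flip: power_Suc)
  ultimately show ?thesis using cong_mult_lcancel by blast
qed

lemma Legendre_eqI:
  assumes p: "2 < p" and "[Legendre a (int p) = Legendre b (int p)] (mod int p)"
  shows "Legendre a (int p) = Legendre b (int p)"
proof (rule ccontr)
  let ?\<delta> = "Legendre a (int p) - Legendre b (int p)"
  assume "Legendre a (int p) \<noteq> Legendre b (int p)"
  moreover have "int p dvd ?\<delta>"
    using assms(2) cong_iff_dvd_diff cong_sym by blast
  ultimately have "\<bar>int p\<bar> \<le> \<bar>?\<delta>\<bar>"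
    using dvd_imp_le_int[of ?\<delta> "int p"] by simp
  moreover have "\<bar>?\<delta>\<bar> \<le> 2" by (simp add: Legendre_def)
  ultimately show False using p by simp
qed

lemma Legendre_mult_square:
  assumes p: "prime p" "2 < p" and b: "\<not> int p dvd b"
  shows "Legendre (a * b ^ 2) (int p) = Legendre a (int p)"
proof (rule Legendre_eqI[OF p(2)])
  have "2 * ((p - 1) div 2) = p - 1" using prime_odd_nat[OF p] by simp
  then have "(b ^ 2) ^ ((p - 1) div 2) = b ^ (p - 1)" by (simp flip: power_mult)
  then have split: "(a * b ^ 2) ^ ((p - 1) div 2) = a ^ ((p - 1) div 2) * b ^ (p - 1)"
    by (simp add: power_mult_distrib)
  have "[Legendre (a * b ^ 2) (int p) = a ^ ((p - 1) div 2) * b ^ (p - 1)] (mod int p)"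
    using euler_criterion[OF p, of "a * b ^ 2"] unfolding split .
  also have "[a ^ ((p - 1) div 2) * b ^ (p - 1) = a ^ ((p - 1) div 2)] (mod int p)"
    using cong_scalar_left[OF fermat_theorem_int[OF p(1) b]] by simp
  also have "[a ^ ((p - 1) div 2) = Legendre a (int p)] (mod int p)"
    by (rule cong_sym[OF euler_criterion[OF p]])
  finally show "[Legendre (a * b ^ 2) (int p) = Legendre a (int p)] (mod int p)" .
qed

section \<open>The Frobenius map modulo an odd prime\<close>

definition pair_poly :: "int \<times> int \<Rightarrow> int poly" where
  "pair_poly x = [:fst x, snd x:]"

lemma pair_poly_wmult:
  "pair_poly (wmult d 0 x y) = pair_poly x * pair_poly y - [:-d, 0, 1:] * [:snd x * snd y:]"
  by (simp add: pair_poly_def wmult_def algebra_simps)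

lemma dvd_pair_poly_power: "[:-d, 0, 1:] dvd pair_poly x ^ n - pair_poly (wpow d 0 x n)"
proof (induction n)
  case 0
  then show ?case by (simp add: pair_poly_def one_pCons)
next
  case (Suc n)
  have "pair_poly x ^ Suc n - pair_poly (wpow d 0 x (Suc n))
      = pair_poly x * (pair_poly x ^ n - pair_poly (wpow d 0 x n))
        + [:-d, 0, 1:] * [:snd x * snd (wpow d 0 x n):]"
    by (simp only: wpow_Suc pair_poly_wmult) (simp add: algebra_simps)
  then show ?case by (simp only:) (intro dvd_add dvd_mult Suc.IH dvd_triv_left)
qed

text \<open>Since \<open>X\<^sup>2 - d\<close> is monic of degree 2, a linear polynomial in the ideal
  \<open>(X\<^sup>2 - d, p)\<close> of \<open>\<int>[X]\<close> has all its coefficients divisible by \<open>p\<close>.\<close>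

lemma qcong_if_dvd_pair_poly_diff:
  assumes "[:-d, 0, 1:] dvd pair_poly x - pair_poly y - smult (int p) g"
  shows "qcong p x y"
proof -
  define M where "M = [:-d, 0, 1:]"
  obtain Q R where QR: "pseudo_divmod g M = (Q, R)" by fastforce
  have M0: "M \<noteq> 0" by (simp add: M_def)
  have g: "g = M * Q + R" and R: "R = 0 \<or> degree R < degree M"
    using pseudo_divmod[OF M0 QR] by (simp_all add: M_def)
  define f where "f = pair_poly x - pair_poly y - smult (int p) R"
  have "f = (pair_poly x - pair_poly y - smult (int p) g) + M * smult (int p) Q"
    by (simp add: f_def g smult_add_right)
  then have "M dvd f"
    using assms by (simp only: M_def) (intro dvd_add dvd_triv_left)
  moreover have "degree f < degree M"
    unfolding f_def using R
    by (intro degree_diff_less le_less_trans[OF degree_smult_le]) (auto simp: M_def pair_poly_def)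
  ultimately have "f = 0" using dvd_imp_degree_le by fastforce
  then have "coeff f 0 = 0" "coeff f 1 = 0" by simp_all
  then show ?thesis by (simp add: f_def pair_poly_def qcong_def cong_iff_dvd_diff)
qed

text \<open>With \<open>q = 2n + 1\<close>, modulo \<open>q\<close> and \<open>X\<^sup>2 - d\<close>:
  \<open>(u + vX)\<^sup>q \<equiv> u\<^sup>q + v\<^sup>q X (X\<^sup>2)\<^sup>n \<equiv> u + d\<^sup>n v X\<close>, and \<open>d\<^sup>n \<equiv> (d/q)\<close> by Euler's criterion.\<close>

lemma wpow_prime_sqrt:
  assumes q: "prime q" "2 < q"
  shows "qcong q (wpow d 0 x q) (fst x, Legendre d (int q) * snd x)"
proof -
  define n where "n = (q - 1) div 2"
  define X :: "int poly" where "X = [:0, 1:]"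
  define M where "M = [:-d, 0, 1:]"
  obtain u v where x: "x = (u, v)" by fastforce
  have "odd q" using q prime_odd_nat by blast
  then have qn: "q = Suc (2 * n)" unfolding n_def by presburger
  have M: "M = X ^ 2 - [:d:]" by (simp add: M_def X_def power2_eq_square)
  obtain Z where "([:u:] + smult v X) ^ q = [:u:] ^ q + smult v X ^ q + of_nat q * Z"
    using power_add_prime[OF q(1)] by blast
  then have Z: "pair_poly x ^ q = [:u ^ q:] + smult (v ^ q) (X ^ q) + smult (int q) Z"
    unfolding smult_power by (simp add: x pair_poly_def X_def poly_const_pow smult_power of_nat_poly)
  have "M dvd (X ^ 2) ^ n - [:d:] ^ n"
    unfolding M power_diff_sumr2 by (rule dvd_triv_left)
  then have "M dvd X * ((X ^ 2) ^ n - [:d:] ^ n)" by simp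
  moreover have "X * ((X ^ 2) ^ n - [:d:] ^ n) = X ^ q - [:0, d ^ n:]"
  proof -
    have "X ^ q = X * (X ^ 2) ^ n" unfolding qn power_Suc power_mult ..
    moreover have "X * [:d:] ^ n = [:0, d ^ n:]" by (simp add: X_def poly_const_pow)
    ultimately show ?thesis by (simp add: right_diff_distrib)
  qed
  ultimately have "M dvd smult (v ^ q) (X ^ q - [:0, d ^ n:])" by (simp add: dvd_smult)
  moreover have "smult (v ^ q) (X ^ q - [:0, d ^ n:])
      = pair_poly x ^ q - pair_poly (u ^ q, v ^ q * d ^ n) - smult (int q) Z"
    unfolding Z by (simp add: pair_poly_def smult_diff_right)
  ultimately have "M dvd pair_poly x ^ q - pair_poly (u ^ q, v ^ q * d ^ n) - smult (int q) Z"
    by simp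
  then have "M dvd (pair_poly x ^ q - pair_poly (u ^ q, v ^ q * d ^ n) - smult (int q) Z)
      - (pair_poly x ^ q - pair_poly (wpow d 0 x q))"
    using dvd_pair_poly_power[of d x q] unfolding M_def by (rule dvd_diff)
  then have "M dvd pair_poly (wpow d 0 x q) - pair_poly (u ^ q, v ^ q * d ^ n) - smult (int q) Z"
    by (simp add: algebra_simps)
  then have "qcong q (wpow d 0 x q) (u ^ q, v ^ q * d ^ n)"
    unfolding M_def by (rule qcong_if_dvd_pair_poly_diff)
  moreover have "[u ^ q = u] (mod int q)" "[v ^ q * d ^ n = v * Legendre d (int q)] (mod int q)"
    using fermat_little_int[OF q(1)] euler_criterion[OF q]
    by (auto simp: n_def intro: cong_mult cong_sym)
  ultimately show ?thesis
    by (simp add: x qcong_def mult.commute) (meson cong_trans)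
qed

section \<open>The norm-one group modulo an odd prime\<close>

lemma Legendre_cases:
  assumes "\<not> int p dvd a"
  shows "Legendre a (int p) = 1 \<or> Legendre a (int p) = -1"
  using assms by (auto simp: Legendre_def cong_0_iff)

lemma wpow_exponent_sqrt:
  assumes q: "prime q" "2 < q" and d: "\<not> int q dvd d"
    and y: "[wnorm d 0 y = 1] (mod int q)"
  shows "qcong q (wpow d 0 y (nat (int q - Legendre d (int q)))) (1, 0)"
proof -
  have frob: "qcong q (wpow d 0 y q) (fst y, Legendre d (int q) * snd y)"
    by (rule wpow_prime_sqrt[OF q])
  have norm: "qcong q (wmult d 0 y (sconj y)) (1, 0)"
    using y by (simp add: wmult_sconj qcong_def)
  from Legendre_cases[OF d] show ?thesis
  proof
    assume L: "Legendre d (int q) = 1"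
    have q1: "q = Suc (q - 1)" using q by simp
    have "qcong q (wpow d 0 y (q - 1)) (wmult d 0 (wpow d 0 y (q - 1)) (wmult d 0 y (sconj y)))"
      using qcong_wmult[OF qcong_refl qcong_sym[OF norm]] by simp
    also have "wmult d 0 (wpow d 0 y (q - 1)) (wmult d 0 y (sconj y)) = wmult d 0 (wpow d 0 y q) (sconj y)"
      by (metis q1 wpow_Suc wmult_ac)
    also have "qcong q \<dots> (wmult d 0 y (sconj y))"
      using frob L by (simp add: qcong_wmult)
    also note norm
    finally have "qcong q (wpow d 0 y (q - 1)) (1, 0)" .
    moreover have "nat (int q - Legendre d (int q)) = q - 1" using L q(2) by simp
    ultimately show ?thesis by simp
  next
    assume L: "Legendre d (int q) = -1"
    have "qcong q (wpow d 0 y (Suc q)) (wmult d 0 (sconj y) y)"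
      using qcong_wmult[OF frob qcong_refl] L by (simp add: wpow_Suc wmult_comm sconj_def)
    also have "qcong q (wmult d 0 (sconj y) y) (1, 0)"
      using norm by (simp add: wmult_comm)
    finally have "qcong q (wpow d 0 y (Suc q)) (1, 0)" .
    moreover have "nat (int q - Legendre d (int q)) = Suc q" using L by simp
    ultimately show ?thesis by simp
  qed
qed

definition sqrt_eval :: "int \<Rightarrow> int \<times> int \<Rightarrow> int" where
  "sqrt_eval r x = fst x + snd x * r"

lemma cong_sqrt_eval_wmult:
  assumes "[r ^ 2 = d] (mod int n)"
  shows "[sqrt_eval r (wmult d 0 x z) = sqrt_eval r x * sqrt_eval r z] (mod int n)"
proof -
  have "sqrt_eval r (wmult d 0 x z) - sqrt_eval r x * sqrt_eval r z = snd x * snd z * (d - r ^ 2)"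
    by (simp add: sqrt_eval_def wmult_def power2_eq_square algebra_simps)
  with assms show ?thesis
    by (metis cong_iff_dvd_diff cong_sym dvd_mult)
qed

lemma cong_sqrt_eval_wpow:
  assumes "[r ^ 2 = d] (mod int n)"
  shows "[sqrt_eval r (wpow d 0 x e) = sqrt_eval r x ^ e] (mod int n)"
proof (induction e)
  case 0
  then show ?case by (simp add: sqrt_eval_def)
next
  case (Suc e)
  have "[sqrt_eval r (wpow d 0 x (Suc e)) = sqrt_eval r x * sqrt_eval r (wpow d 0 x e)] (mod int n)"
    unfolding wpow_Suc using assms by (rule cong_sqrt_eval_wmult)
  also have "[sqrt_eval r x * sqrt_eval r (wpow d 0 x e) = sqrt_eval r x ^ Suc e] (mod int n)"
    using Suc.IH by (simp add: cong_scalar_left)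
  finally show ?case .
qed

lemma cong_sqrt_eval: "qcong n x y \<Longrightarrow> [sqrt_eval r x = sqrt_eval r y] (mod int n)"
  unfolding qcong_def sqrt_eval_def by (auto intro!: cong_add cong_mult)

text \<open>\<open>w = r(g + 1) + (g - 1)\<surd>d\<close> maps to \<open>2rg\<close> and \<open>w\<^sup>\<sigma>\<close> to \<open>2r\<close> under \<open>\<surd>d \<mapsto> r\<close>,
  so \<open>y = w (w\<^sup>\<sigma>)\<^sup>q\<^sup>-\<^sup>2\<close> maps to \<open>g\<close> and has norm \<open>N(w)\<^sup>q\<^sup>-\<^sup>1 \<equiv> 1\<close>.\<close>

lemma norm_one_lift_split:
  assumes q: "prime q" "2 < q" and d: "\<not> int q dvd d" and r: "[r ^ 2 = d] (mod int q)"
    and g: "\<not> int q dvd g"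
  obtains y where "[wnorm d 0 y = 1] (mod int q)" and "[sqrt_eval r y = g] (mod int q)"
proof -
  have pq: "prime (int q)" using q(1) by simp
  have "\<not> int q dvd r"
  proof
    assume "int q dvd r"
    then have "int q dvd r ^ 2" by (simp add: power2_eq_square)
    then show False using d cong_dvd_iff[OF r] by blast
  qed
  moreover have two: "\<not> int q dvd 2" using q(2) by (auto dest: zdvd_imp_le)
  ultimately have r2: "\<not> int q dvd 2 * r" using pq by (simp add: prime_dvd_mult_iff)
  define w where "w = (r * (g + 1), g - 1)"
  define y where "y = wmult d 0 w (wpow d 0 (sconj w) (q - 2))"
  have q2: "q - 1 = Suc (q - 2)" using q(2) by simp
  have "[sqrt_eval r y = sqrt_eval r w * sqrt_eval r (sconj w) ^ (q - 2)] (mod int q)"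
    unfolding y_def using cong_sqrt_eval_wmult[OF r] cong_sqrt_eval_wpow[OF r]
    by (meson cong_scalar_left cong_trans)
  also have "sqrt_eval r w * sqrt_eval r (sconj w) ^ (q - 2) = g * (2 * r) ^ (q - 1)"
    unfolding q2 by (simp add: sqrt_eval_def sconj_def w_def algebra_simps)
  also have "[g * (2 * r) ^ (q - 1) = g] (mod int q)"
    using cong_scalar_left[OF fermat_theorem_int[OF q(1) r2]] by simp
  finally have y_eval: "[sqrt_eval r y = g] (mod int q)" .
  have "wnorm d 0 w - 4 * d * g = (g + 1) ^ 2 * (r ^ 2 - d)"
    by (simp add: wnorm_def w_def power2_eq_square algebra_simps)
  then have "[wnorm d 0 w = 4 * d * g] (mod int q)"
    using r by (simp add: cong_iff_dvd_diff)
  moreover have "\<not> int q dvd 4 * d * g"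
    using pq d two g prime_dvd_power_iff[OF pq, of 2 2] by (simp add: prime_dvd_mult_iff)
  ultimately have "\<not> int q dvd wnorm d 0 w" by (simp add: cong_dvd_iff)
  moreover have "wnorm d 0 y = wnorm d 0 w ^ (q - 1)"
    unfolding y_def q2 wnorm_wmult wnorm_wpow by (simp add: wnorm_def sconj_def)
  ultimately have "[wnorm d 0 y = 1] (mod int q)" using fermat_theorem_int[OF q(1)] by simp
  with y_eval show ?thesis using that by blast
qed

lemma norm_one_element_of_order_split:
  assumes q: "prime q" "2 < q" and d: "\<not> int q dvd d" and L: "Legendre d (int q) = 1"
  obtains y where "[wnorm d 0 y = 1] (mod int q)"
    and "\<And>e. qcong q (wpow d 0 y e) (1, 0) \<Longrightarrow> q - 1 dvd e"
proof -
  have "QuadRes (int q) d" using L by (auto simp: Legendre_def split: if_splits)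
  then obtain r where r: "[r ^ 2 = d] (mod int q)" unfolding QuadRes_def by blast
  obtain g where g: "residue_primroot q g" using prime_primitive_root_exists q prime_gt_1_nat by blast
  then have ord_g: "ord q g = q - 1" using q(1) by (simp add: residue_primroot_def totient_prime)
  have "\<not> int q dvd int g"
    using g q(1) by (simp add: residue_primroot_def) (metis coprime_absorb_left not_prime_unit)
  then obtain y where y: "[wnorm d 0 y = 1] (mod int q)" and y_eval: "[sqrt_eval r y = int g] (mod int q)"
    using norm_one_lift_split[OF q d r] by blast
  moreover have "q - 1 dvd e" if "qcong q (wpow d 0 y e) (1, 0)" for e
  proof -
    have "[int g ^ e = sqrt_eval r (wpow d 0 y e)] (mod int q)"
      using cong_sqrt_eval_wpow[OF r] cong_pow[OF y_eval] by (meson cong_sym cong_trans)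
    also have "[sqrt_eval r (wpow d 0 y e) = 1] (mod int q)"
      using cong_sqrt_eval[OF that] by (simp add: sqrt_eval_def)
    finally have "[g ^ e = 1] (mod q)" by (simp flip: cong_int_iff)
    then show ?thesis using ord_g by (simp add: ord_divides')
  qed
  ultimately show ?thesis using that by blast
qed

definition wreduce :: "nat \<Rightarrow> int \<times> int \<Rightarrow> int \<times> int" where
  "wreduce n x = (fst x mod int n, snd x mod int n)"

definition wring :: "int \<Rightarrow> int \<Rightarrow> nat \<Rightarrow> (int \<times> int) ring" where
  "wring c0 c1 n =
     \<lparr>carrier = {0..<int n} \<times> {0..<int n},
      mult = \<lambda>x y. wreduce n (wmult c0 c1 x y), one = (1, 0), zero = (0, 0),
      add = \<lambda>x y. wreduce n (fst x + fst y, snd x + snd y)\<rparr>"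

lemma wring_simps [simp]:
  "carrier (wring c0 c1 n) = {0..<int n} \<times> {0..<int n}"
  "x \<otimes>\<^bsub>wring c0 c1 n\<^esub> y = wreduce n (wmult c0 c1 x y)"
  "\<one>\<^bsub>wring c0 c1 n\<^esub> = (1, 0)"
  "\<zero>\<^bsub>wring c0 c1 n\<^esub> = (0, 0)"
  "x \<oplus>\<^bsub>wring c0 c1 n\<^esub> y = wreduce n (fst x + fst y, snd x + snd y)"
  by (simp_all add: wring_def)

lemma wreduce_eq_iff: "wreduce n x = wreduce n y \<longleftrightarrow> qcong n x y"
  by (simp add: wreduce_def qcong_def cong_def prod_eq_iff)

lemma qcong_wreduce: "qcong n (wreduce n x) x"
  by (simp add: wreduce_def qcong_def cong_def)

lemma wreduce_wmult_wreduce [simp]: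
  "wreduce n (wmult c0 c1 (wreduce n x) y) = wreduce n (wmult c0 c1 x y)"
  "wreduce n (wmult c0 c1 x (wreduce n y)) = wreduce n (wmult c0 c1 x y)"
  by (simp_all add: wreduce_eq_iff qcong_wmult qcong_wreduce)

lemma wreduce_id: "x \<in> {0..<int n} \<times> {0..<int n} \<Longrightarrow> wreduce n x = x"
  by (auto simp: wreduce_def)

lemma wring_cring:
  assumes "1 < n"
  shows "cring (wring c0 c1 n)"
proof (rule cringI)
  show "abelian_group (wring c0 c1 n)"
  proof (rule abelian_groupI)
    show "\<exists>y\<in>carrier (wring c0 c1 n). y \<oplus>\<^bsub>wring c0 c1 n\<^esub> x = \<zero>\<^bsub>wring c0 c1 n\<^esub>"
      if "x \<in> carrier (wring c0 c1 n)" for x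
      using assms by (intro bexI[of _ "wreduce n (- fst x, - snd x)"]) (auto simp: wreduce_def mod_add_left_eq)
  qed (use assms in \<open>auto simp: wreduce_def mod_add_left_eq mod_add_right_eq ac_simps\<close>)
  show "comm_monoid (wring c0 c1 n)"
    by (rule comm_monoidI) (use assms in \<open>auto simp: wmult_ac wreduce_id, simp add: wreduce_def\<close>)
  have distrib: "wmult c0 c1 (fst x + fst y, snd x + snd y) z
      = (fst (wmult c0 c1 x z) + fst (wmult c0 c1 y z), snd (wmult c0 c1 x z) + snd (wmult c0 c1 y z))"
    for x y z by (simp add: wmult_def algebra_simps)
  show "(x \<oplus>\<^bsub>wring c0 c1 n\<^esub> y) \<otimes>\<^bsub>wring c0 c1 n\<^esub> z
      = x \<otimes>\<^bsub>wring c0 c1 n\<^esub> z \<oplus>\<^bsub>wring c0 c1 n\<^esub> y \<otimes>\<^bsub>wring c0 c1 n\<^esub> z" for x y z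
    by (simp only: wring_simps wreduce_wmult_wreduce distrib) (simp add: wreduce_def mod_add_eq)
qed

lemma wreduce_in_carrier [simp]: "0 < n \<Longrightarrow> wreduce n x \<in> {0..<int n} \<times> {0..<int n}"
  by (simp add: wreduce_def)

lemma wring_pow:
  assumes "1 < n" "x \<in> carrier (wring c0 c1 n)"
  shows "x [^]\<^bsub>wring c0 c1 n\<^esub> k = wreduce n (wpow c0 c1 x k)"
proof (induction k)
  case 0
  then show ?case using assms(1) by (simp add: wreduce_def)
next
  case (Suc k)
  then show ?case by (simp add: wpow_Suc wmult_comm)
qed

lemma wnorm_not_dvd_inert:
  assumes q: "prime q" "2 < q" and L: "Legendre d (int q) = -1"
    and x: "x \<in> {0..<int q} \<times> {0..<int q}" "x \<noteq> (0, 0)"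
  shows "\<not> int q dvd wnorm d 0 x"
proof
  assume dvd: "int q dvd wnorm d 0 x"
  have pq: "prime (int q)" using q(1) by simp
  show False
  proof (cases "int q dvd snd x")
    case True
    then have "int q dvd wnorm d 0 x + d * snd x ^ 2"
      using dvd by (intro dvd_add) (simp_all add: power2_eq_square)
    then have "int q dvd fst x ^ 2" by (simp add: wnorm_def)
    then have "int q dvd fst x" by (rule prime_dvd_power[OF pq])
    with True x show False by (auto simp: dvd_eq_mod_eq_0 prod_eq_iff)
  next
    case False
    have "[fst x ^ 2 = d * snd x ^ 2] (mod int q)"
      using dvd by (simp add: wnorm_def cong_iff_dvd_diff)
    then have "QuadRes (int q) (d * snd x ^ 2)" unfolding QuadRes_def by blast
    then have "Legendre (d * snd x ^ 2) (int q) \<noteq> -1" by (simp add: Legendre_def)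
    then show False using Legendre_mult_square[OF q False] L by simp
  qed
qed

lemma wring_field:
  assumes q: "prime q" "2 < q" and L: "Legendre d (int q) = -1"
  shows "field (wring d 0 q)"
proof -
  have q1: "1 < q" using q(2) by simp
  interpret cring "wring d 0 q" by (rule wring_cring[OF q1])
  show ?thesis
  proof (rule cring_fieldI2)
    fix a assume a: "a \<in> carrier (wring d 0 q)" "a \<noteq> \<zero>\<^bsub>wring d 0 q\<^esub>"
    let ?n = "wnorm d 0 a"
    let ?b = "wreduce q (wmult d 0 (?n ^ (q - 2), 0) (sconj a))"
    have "\<not> int q dvd ?n" using wnorm_not_dvd_inert[OF q L] a by simp
    then have "qcong q (?n ^ (q - 1), 0) (1, 0)"
      using fermat_theorem_int[OF q(1)] by (simp add: qcong_def)
    moreover have "wmult d 0 (?n ^ (q - 2), 0) (wmult d 0 a (sconj a)) = (?n ^ (q - 1), 0)"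
    proof -
      have "q - 1 = Suc (q - 2)" using q(2) by simp
      then show ?thesis unfolding wmult_sconj by (simp add: wmult_def)
    qed
    ultimately have "wreduce q (wmult d 0 a (wmult d 0 (?n ^ (q - 2), 0) (sconj a))) = wreduce q (1, 0)"
      by (simp add: wmult_left_commute wreduce_eq_iff)
    then have "a \<otimes>\<^bsub>wring d 0 q\<^esub> ?b = wreduce q (1, 0)" by simp
    also have "wreduce q (1, 0) = \<one>\<^bsub>wring d 0 q\<^esub>" using q1 by (simp add: wreduce_def)
    finally have "a \<otimes>\<^bsub>wring d 0 q\<^esub> ?b = \<one>\<^bsub>wring d 0 q\<^esub>" .
    moreover have "?b \<in> carrier (wring d 0 q)" using q1 by simp
    ultimately show "\<exists>b\<in>carrier (wring d 0 q). a \<otimes>\<^bsub>wring d 0 q\<^esub> b = \<one>\<^bsub>wring d 0 q\<^esub>"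
      by blast
  qed simp
qed

lemma (in field) exists_primitive_element:
  assumes fin: "finite (carrier R)"
  obtains a where "a \<in> carrier (mult_of R)" and "group.ord (mult_of R) a = card (carrier R) - 1"
proof -
  interpret G: group "mult_of R" by (rule field_mult_group)
  obtain a where a: "a \<in> carrier (mult_of R)"
    and gen: "carrier (mult_of R) = {a [^] i | i::nat. i \<in> UNIV}"
    using finite_field_mult_group_has_gen[OF fin] by blast
  have "G.ord a = card (generate (mult_of R) {a})" by (rule G.generate_pow_card[OF a])
  also have "generate (mult_of R) {a} = carrier (mult_of R)"
    using G.generate_pow_on_finite_carrier[OF _ a] gen fin by (simp add: nat_pow_mult_of)
  also have "card (carrier (mult_of R)) = card (carrier R) - 1"
    using fin by (simp add: card_Diff_singleton)
  finally show ?thesis using a that by blast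
qed

lemma norm_one_element_of_order_inert:
  assumes q: "prime q" "2 < q" and L: "Legendre d (int q) = -1"
  obtains y where "[wnorm d 0 y = 1] (mod int q)"
    and "\<And>e. qcong q (wpow d 0 y e) (1, 0) \<Longrightarrow> q + 1 dvd e"
proof -
  let ?R = "wring d 0 q"
  have q1: "1 < q" using q(2) by simp
  interpret field ?R by (rule wring_field[OF q L])
  interpret G: group "mult_of ?R" by (rule field_mult_group)
  have "finite (carrier ?R)" by simp
  then obtain a where a: "a \<in> carrier (mult_of ?R)" and ord: "G.ord a = card (carrier ?R) - 1"
    by (rule exists_primitive_element)
  have K: "card (carrier ?R) - 1 = (q - 1) * (q + 1)"
    by (simp add: card_cartesian_product algebra_simps)
  have a_pow: "qcong q (wpow d 0 a n) (1, 0) \<longleftrightarrow> (q - 1) * (q + 1) dvd n" for n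
  proof -
    have "a [^]\<^bsub>mult_of ?R\<^esub> n = wreduce q (wpow d 0 a n)"
      using wring_pow[OF q1] a by (simp add: nat_pow_mult_of)
    moreover have "\<one>\<^bsub>mult_of ?R\<^esub> = wreduce q (1, 0)" using q1 by (simp add: wreduce_def)
    ultimately have "qcong q (wpow d 0 a n) (1, 0) \<longleftrightarrow> a [^]\<^bsub>mult_of ?R\<^esub> n = \<one>\<^bsub>mult_of ?R\<^esub>"
      by (simp only: wreduce_eq_iff)
    then show ?thesis using G.pow_eq_id[OF a, of n] ord K by simp
  qed
  \<comment> \<open>\<open>y = a\<^sup>q / a = a\<^sup>\<sigma> / a\<close> has norm one and order \<open>q + 1\<close>.\<close>
  define y where "y = wpow d 0 a (q - 1)"
  have "qcong q (wmult d 0 (sconj y) y) (wpow d 0 y (Suc q))"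
    using qcong_wmult[OF wpow_prime_sqrt[OF q, where d = d and x = y] qcong_refl[of q y]] L
    by (simp add: sconj_def wpow_Suc wmult_comm qcong_sym)
  also have "qcong q (wpow d 0 y (Suc q)) (1, 0)"
    using a_pow by (simp add: y_def flip: wpow_mult)
  finally have "[wnorm d 0 y = 1] (mod int q)"
    by (simp add: wmult_comm wmult_sconj qcong_def)
  moreover have "q + 1 dvd e" if "qcong q (wpow d 0 y e) (1, 0)" for e
  proof -
    have "(q - 1) * (q + 1) dvd (q - 1) * e"
      using that unfolding a_pow[symmetric] y_def wpow_mult .
    then show ?thesis using q1 by (subst (asm) dvd_times_left_cancel_iff) auto
  qed
  ultimately show ?thesis using that by blast
qed

lemma norm_one_element_of_order_sqrt:
  assumes q: "prime q" "2 < q" and d: "\<not> int q dvd d"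
  obtains y where "[wnorm d 0 y = 1] (mod int q)"
    and "\<And>e. qcong q (wpow d 0 y e) (1, 0) \<Longrightarrow> nat (int q - Legendre d (int q)) dvd e"
  using Legendre_cases[OF d]
proof
  assume L: "Legendre d (int q) = 1"
  then have "nat (int q - Legendre d (int q)) = q - 1" using q(2) by simp
  then show ?thesis using norm_one_element_of_order_split[OF q d L] that by metis
next
  assume L: "Legendre d (int q) = -1"
  then have "nat (int q - Legendre d (int q)) = q + 1" by simp
  then show ?thesis using norm_one_element_of_order_inert[OF q L] that by metis
qed

section \<open>Halving: from \<open>\<int>[\<omega>]\<close> to \<open>\<int>[\<surd>\<delta>]\<close> modulo an odd number\<close>

text \<open>For odd \<open>m\<close>, \<open>h = (m + 1) div 2\<close> inverts 2 modulo \<open>m\<close>, and \<open>to_sqrt\<close> rewrites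
  \<open>a + b\<omega>\<close> as \<open>(a + h c\<^sub>1 b) + h b \<surd>\<delta>\<close> with \<open>\<delta> = c\<^sub>1\<^sup>2 + 4 c\<^sub>0\<close>, since
  \<open>\<omega> = (c\<^sub>1 + \<surd>\<delta>) / 2\<close>.\<close>

definition to_sqrt :: "nat \<Rightarrow> int \<Rightarrow> int \<times> int \<Rightarrow> int \<times> int" where
  "to_sqrt m c1 x = (fst x + (int m + 1) div 2 * c1 * snd x, (int m + 1) div 2 * snd x)"

lemma to_sqrt_1 [simp]: "to_sqrt m c1 (1, 0) = (1, 0)"
  by (simp add: to_sqrt_def)

lemma half_odd: "odd m \<Longrightarrow> 2 * ((int m + 1) div 2) - 1 = int m"
  by presburger

lemma qcong_to_sqrt_wmult:
  assumes "odd m"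
  shows "qcong m (to_sqrt m c1 (wmult c0 c1 x y))
                 (wmult (c1 ^ 2 + 4 * c0) 0 (to_sqrt m c1 x) (to_sqrt m c1 y))"
proof -
  define h where "h = (int m + 1) div 2"
  have m: "int m = 2 * h - 1" using half_odd[OF assms] by (simp add: h_def)
  have "fst (to_sqrt m c1 (wmult c0 c1 x y)) - fst (wmult (c1 ^ 2 + 4 * c0) 0 (to_sqrt m c1 x) (to_sqrt m c1 y))
      = int m * - (snd x * snd y * (c1 ^ 2 * h + c0 * (2 * h + 1)))"
    "snd (to_sqrt m c1 (wmult c0 c1 x y)) - snd (wmult (c1 ^ 2 + 4 * c0) 0 (to_sqrt m c1 x) (to_sqrt m c1 y))
      = int m * - (h * c1 * snd x * snd y)"
    unfolding to_sqrt_def wmult_def h_def[symmetric] m by (simp_all add: power2_eq_square algebra_simps)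
  then show ?thesis by (simp add: qcong_def cong_iff_dvd_diff)
qed

lemma qcong_to_sqrt: "qcong m x y \<Longrightarrow> qcong m (to_sqrt m c1 x) (to_sqrt m c1 y)"
  unfolding qcong_def to_sqrt_def by (auto intro!: cong_add cong_mult)

lemma qcong_to_sqrt_wpow:
  assumes "odd m"
  shows "qcong m (to_sqrt m c1 (wpow c0 c1 x n)) (wpow (c1 ^ 2 + 4 * c0) 0 (to_sqrt m c1 x) n)"
proof (induction n)
  case 0
  then show ?case by simp
next
  case (Suc n)
  have "qcong m (to_sqrt m c1 (wpow c0 c1 x (Suc n)))
      (wmult (c1 ^ 2 + 4 * c0) 0 (to_sqrt m c1 x) (to_sqrt m c1 (wpow c0 c1 x n)))"
    unfolding wpow_Suc by (rule qcong_to_sqrt_wmult[OF assms])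
  also have "qcong m \<dots> (wpow (c1 ^ 2 + 4 * c0) 0 (to_sqrt m c1 x) (Suc n))"
    unfolding wpow_Suc by (rule qcong_wmult[OF qcong_refl Suc.IH])
  finally show ?case .
qed

lemma cong_wnorm_to_sqrt:
  assumes "odd m"
  shows "[wnorm (c1 ^ 2 + 4 * c0) 0 (to_sqrt m c1 x) = wnorm c0 c1 x] (mod int m)"
proof -
  define h where "h = (int m + 1) div 2"
  have m: "int m = 2 * h - 1" using half_odd[OF assms] by (simp add: h_def)
  have "wnorm (c1 ^ 2 + 4 * c0) 0 (to_sqrt m c1 x) - wnorm c0 c1 x
      = int m * (c1 * fst x * snd x - c0 * snd x ^ 2 * (2 * h + 1))"
    unfolding to_sqrt_def wnorm_def h_def[symmetric] m by (simp add: power2_eq_square algebra_simps)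
  then show ?thesis by (simp add: cong_iff_dvd_diff)
qed

lemma qcong_to_sqrt_cancel:
  assumes "odd m" and "qcong m (to_sqrt m c1 x) (to_sqrt m c1 y)"
  shows "qcong m x y"
proof -
  define h where "h = (int m + 1) div 2"
  have m: "int m = 2 * h - 1" using half_odd[OF assms(1)] by (simp add: h_def)
  have b: "int m dvd h * snd x - h * snd y"
    and a: "int m dvd (fst x + h * c1 * snd x) - (fst y + h * c1 * snd y)"
    using assms(2) by (simp_all add: qcong_def to_sqrt_def cong_iff_dvd_diff h_def)
  have "snd x - snd y = 2 * (h * snd x - h * snd y) - int m * snd x + int m * snd y"
    by (simp add: m algebra_simps)
  then have "int m dvd snd x - snd y"
    by (simp only:) (intro dvd_add dvd_diff dvd_mult b dvd_triv_left)
  moreover have "fst x - fst y = ((fst x + h * c1 * snd x) - (fst y + h * c1 * snd y)) - c1 * (h * snd x - h * snd y)"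
    by (simp add: algebra_simps)
  then have "int m dvd fst x - fst y"
    by (simp only:) (intro dvd_diff dvd_mult a b)
  ultimately show ?thesis by (simp add: qcong_def cong_iff_dvd_diff)
qed

lemma qcong_to_sqrt_preimage:
  assumes "odd m"
  shows "qcong m (to_sqrt m c1 (fst y - c1 * snd y, 2 * snd y)) y"
proof -
  define h where "h = (int m + 1) div 2"
  have m: "int m = 2 * h - 1" using half_odd[OF assms] by (simp add: h_def)
  have "fst (to_sqrt m c1 (fst y - c1 * snd y, 2 * snd y)) - fst y = int m * (c1 * snd y)"
    "snd (to_sqrt m c1 (fst y - c1 * snd y, 2 * snd y)) - snd y = int m * snd y"
    unfolding to_sqrt_def h_def[symmetric] m by (simp_all add: algebra_simps)
  then show ?thesis by (simp add: qcong_def cong_iff_dvd_diff)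
qed

lemma wpow_exponent:
  assumes q: "prime q" "2 < q" and disc: "\<not> int q dvd c1 ^ 2 + 4 * c0"
    and x: "[wnorm c0 c1 x = 1] (mod int q)"
  shows "qcong q (wpow c0 c1 x (nat (int q - Legendre (c1 ^ 2 + 4 * c0) (int q)))) (1, 0)"
proof -
  let ?F = "nat (int q - Legendre (c1 ^ 2 + 4 * c0) (int q))"
  have odd: "odd q" using q prime_odd_nat by blast
  have "[wnorm (c1 ^ 2 + 4 * c0) 0 (to_sqrt q c1 x) = 1] (mod int q)"
    using cong_wnorm_to_sqrt[OF odd] x by (rule cong_trans)
  then have "qcong q (wpow (c1 ^ 2 + 4 * c0) 0 (to_sqrt q c1 x) ?F) (1, 0)"
    by (rule wpow_exponent_sqrt[OF q disc])
  then have "qcong q (to_sqrt q c1 (wpow c0 c1 x ?F)) (to_sqrt q c1 (1, 0))"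
    unfolding to_sqrt_1 by (rule qcong_trans[OF qcong_to_sqrt_wpow[OF odd]])
  then show ?thesis by (rule qcong_to_sqrt_cancel[OF odd])
qed

lemma norm_one_element_of_order:
  assumes q: "prime q" "2 < q" and disc: "\<not> int q dvd c1 ^ 2 + 4 * c0"
  obtains x where "[wnorm c0 c1 x = 1] (mod int q)"
    and "\<And>e. qcong q (wpow c0 c1 x e) (1, 0) \<Longrightarrow>
           nat (int q - Legendre (c1 ^ 2 + 4 * c0) (int q)) dvd e"
proof -
  let ?d = "c1 ^ 2 + 4 * c0"
  have odd: "odd q" using q prime_odd_nat by blast
  obtain y where y: "[wnorm ?d 0 y = 1] (mod int q)"
    and y_ord: "\<And>e. qcong q (wpow ?d 0 y e) (1, 0) \<Longrightarrow> nat (int q - Legendre ?d (int q)) dvd e"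
    using norm_one_element_of_order_sqrt[OF q disc] by blast
  define x where "x = (fst y - c1 * snd y, 2 * snd y)"
  have x: "qcong q (to_sqrt q c1 x) y" unfolding x_def by (rule qcong_to_sqrt_preimage[OF odd])
  have "[wnorm c0 c1 x = wnorm ?d 0 (to_sqrt q c1 x)] (mod int q)"
    by (rule cong_sym[OF cong_wnorm_to_sqrt[OF odd]])
  also have "[wnorm ?d 0 (to_sqrt q c1 x) = wnorm ?d 0 y] (mod int q)" using x by (rule cong_wnorm)
  finally have "[wnorm c0 c1 x = 1] (mod int q)" using y by (rule cong_trans)
  moreover have "nat (int q - Legendre ?d (int q)) dvd e" if "qcong q (wpow c0 c1 x e) (1, 0)" for e
  proof (rule y_ord)
    have "qcong q (wpow ?d 0 y e) (wpow ?d 0 (to_sqrt q c1 x) e)"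
      by (rule qcong_wpow[OF qcong_sym[OF x]])
    also have "qcong q \<dots> (to_sqrt q c1 (wpow c0 c1 x e))"
      by (rule qcong_sym[OF qcong_to_sqrt_wpow[OF odd]])
    also have "qcong q \<dots> (to_sqrt q c1 (1, 0))" by (rule qcong_to_sqrt[OF that])
    finally show "qcong q (wpow ?d 0 y e) (1, 0)" by simp
  qed
  ultimately show ?thesis using that by blast
qed

section \<open>Carmichael numbers for squarefree moduli\<close>

definition omega_c0 :: "int \<Rightarrow> int" where
  "omega_c0 D = (if D mod 4 = 1 then (D - 1) div 4 else D)"

definition omega_c1 :: "int \<Rightarrow> int" where
  "omega_c1 D = (if D mod 4 = 1 then 1 else 0)"

lemma qmult_eq_wmult: "qmult D = wmult (omega_c0 D) (omega_c1 D)"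
  by (intro ext) (simp add: qmult_def wmult_def omega_c0_def omega_c1_def split: prod.split)

lemma qpow_eq_wpow: "qpow D = wpow (omega_c0 D) (omega_c1 D)"
  by (intro ext) (simp add: qpow_def wpow_def qmult_eq_wmult)

lemma qnorm_eq_wnorm: "qnorm D = wnorm (omega_c0 D) (omega_c1 D)"
proof
  fix x
  have "D mod 4 = 1 \<Longrightarrow> (1 - D) div 4 = - ((D - 1) div 4)" by presburger
  then show "qnorm D x = wnorm (omega_c0 D) (omega_c1 D) x"
    by (cases x) (simp add: qnorm_def wnorm_def omega_c0_def omega_c1_def)
qed

lemma omega_disc: "omega_c1 D ^ 2 + 4 * omega_c0 D = (if D mod 4 = 1 then D else D * 2 ^ 2)"
proof -
  have "D mod 4 = 1 \<Longrightarrow> 1 + 4 * ((D - 1) div 4) = D" by presburger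
  then show ?thesis by (simp add: omega_c0_def omega_c1_def)
qed

lemma
  assumes q: "prime q" "2 < q"
  shows dvd_omega_disc_iff: "int q dvd omega_c1 D ^ 2 + 4 * omega_c0 D \<longleftrightarrow> int q dvd D"
    and Legendre_omega_disc: "Legendre (omega_c1 D ^ 2 + 4 * omega_c0 D) (int q) = Legendre D (int q)"
proof -
  have two: "\<not> int q dvd 2" using q(2) by (auto dest: zdvd_imp_le)
  have "prime (int q)" using q(1) by simp
  with two have "\<not> int q dvd 2 ^ 2" using prime_dvd_power_iff[of "int q" 2 2] by simp
  then show "int q dvd omega_c1 D ^ 2 + 4 * omega_c0 D \<longleftrightarrow> int q dvd D"
    using \<open>prime (int q)\<close> by (simp add: omega_disc prime_dvd_mult_iff)
  show "Legendre (omega_c1 D ^ 2 + 4 * omega_c0 D) (int q) = Legendre D (int q)"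
    using Legendre_mult_square[OF q two] by (simp add: omega_disc)
qed

lemma kronecker_odd_prime: "prime q \<Longrightarrow> q \<noteq> 2 \<Longrightarrow> kronecker D q = Legendre D (int q)"
  by (simp add: kronecker_def kronecker_prime_def prime_prime_factors)

lemma abs_kronecker_le_1: "\<bar>kronecker D n\<bar> \<le> 1"
  unfolding kronecker_def abs_prod power_abs
  by (intro prod_le_1 conjI power_le_one) (simp_all add: kronecker_prime_def Legendre_def)

lemma FD_pos: "1 < n \<Longrightarrow> 0 < FD D n"
  using abs_kronecker_le_1[of D n] by (simp add: FD_def)

lemma FD_odd_prime:
  assumes "prime q" "2 < q"
  shows "FD D q = int q - Legendre (omega_c1 D ^ 2 + 4 * omega_c0 D) (int q)"
  using assms by (simp add: FD_def kronecker_odd_prime Legendre_omega_disc)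

lemma qpow_FD_odd_prime:
  assumes q: "prime q" "2 < q" "\<not> int q dvd D" and x: "[qnorm D x = 1] (mod int q)"
  shows "qcong q (qpow D x (nat (FD D q))) (1, 0)"
  using wpow_exponent[OF q(1,2) _ x[unfolded qnorm_eq_wnorm]] q
  by (simp add: qpow_eq_wpow FD_odd_prime dvd_omega_disc_iff)

lemma qnorm_one_element_of_order_FD:
  assumes q: "prime q" "2 < q" "\<not> int q dvd D"
  obtains x where "[qnorm D x = 1] (mod int q)"
    and "\<And>e. qcong q (qpow D x e) (1, 0) \<Longrightarrow> nat (FD D q) dvd e"
  using norm_one_element_of_order[OF q(1,2), of "omega_c1 D" "omega_c0 D"] q
  by (auto simp: qpow_eq_wpow qnorm_eq_wnorm FD_odd_prime dvd_omega_disc_iff)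

lemma squarefree_dvdI:
  fixes n m :: "'a::factorial_semiring"
  assumes sq: "squarefree n" and primes: "\<And>p. prime p \<Longrightarrow> p dvd n \<Longrightarrow> p dvd m"
  shows "n dvd m"
proof (cases "m = 0")
  case False
  have n0: "n \<noteq> 0" using sq by auto
  show ?thesis
  proof (rule multiplicity_le_imp_dvd[OF n0])
    fix p :: 'a assume p: "prime p"
    show "multiplicity p n \<le> multiplicity p m"
    proof (cases "p dvd n")
      case True
      then have "multiplicity p n \<le> 1" using sq n0 p by (simp add: squarefree_factorial_semiring'')
      moreover have "0 < multiplicity p m"
        using False p primes[OF p True] by (subst multiplicity_gt_zero_iff) (auto simp: not_prime_unit)
      ultimately show ?thesis by simp
    qed (simp add: not_dvd_imp_multiplicity_0)
  qed
qed simp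

lemma qcong_squarefree:
  assumes "squarefree N" and "\<And>q. prime q \<Longrightarrow> q dvd N \<Longrightarrow> qcong q x y"
  shows "qcong N x y"
  using assms squarefree_dvdI[OF assms(1), of "nat \<bar>fst x - fst y\<bar>"]
    squarefree_dvdI[OF assms(1), of "nat \<bar>snd x - snd y\<bar>"]
  by (simp add: qcong_def cong_iff_dvd_diff)

lemma squarefree_coprime_div_prime:
  assumes "squarefree (N::nat)" "prime q" "q dvd N"
  shows "coprime q (N div q)"
proof (rule prime_imp_coprime[OF assms(2)], rule notI)
  assume "q dvd N div q"
  then have "q * q dvd q * (N div q)" by simp
  also have "q * (N div q) = N" using assms(3) by simp
  finally have "q ^ 2 dvd N" by (simp add: power2_eq_square)
  then show False using assms(1,2) by (auto dest: squarefreeD)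
qed

lemma exists_qcong_pair:
  assumes "coprime m n"
  obtains z where "qcong m z x" and "qcong n z y"
proof -
  have "coprime (int m) (int n)" using assms by simp
  then obtain a b where "[a = fst x] (mod int m)" "[a = fst y] (mod int n)"
    and "[b = snd x] (mod int m)" "[b = snd y] (mod int n)"
    by (meson binary_chinese_remainder_int)
  then show ?thesis using that[of "(a, b)"] by (simp add: qcong_def)
qed

lemma prime_factor_odd_coprime:
  assumes "odd N" "coprime (int N) D" "prime q" "q dvd N"
  shows "2 < q" and "\<not> int q dvd D"
proof -
  have "q \<noteq> 2" using assms(1,4) by auto
  then show "2 < q" using prime_ge_2_nat[OF assms(3)] by simp
  show "\<not> int q dvd D"
  proof
    assume "int q dvd D"
    then have "is_unit (int q)" using assms(2,4) by (meson coprime_common_divisor int_dvd_int_iff)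
    then show False using assms(3) by simp
  qed
qed

text \<open>Chinese remaindering: \<open>\<alpha> \<equiv> \<beta>\<close> modulo \<open>q\<close> and \<open>\<alpha> \<equiv> 1\<close> modulo \<open>N/q\<close>.\<close>

lemma G_set_lift:
  assumes sq: "squarefree N" and q: "prime q" "q dvd N"
    and \<beta>: "[qnorm D \<beta> = 1] (mod int q)"
  obtains \<alpha> where "\<alpha> \<in> G_set D N" and "qcong q \<alpha> \<beta>"
proof -
  have cop_q: "coprime q (N div q)" by (rule squarefree_coprime_div_prime[OF sq q])
  then obtain z where zq: "qcong q z \<beta>" and zM: "qcong (N div q) z (1, 0)"
    by (rule exists_qcong_pair)
  define \<alpha> where "\<alpha> = wreduce N z"
  have \<alpha>q: "qcong q \<alpha> \<beta>"
    using qcong_dvd_modulus[OF qcong_wreduce q(2)] zq unfolding \<alpha>_def by (rule qcong_trans)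
  have "N div q dvd N" using q(2) by (metis dvd_mult_div_cancel dvd_triv_right)
  then have \<alpha>M: "qcong (N div q) \<alpha> (1, 0)"
    using qcong_dvd_modulus[OF qcong_wreduce] zM unfolding \<alpha>_def by (blast intro: qcong_trans)
  have "[qnorm D \<alpha> = 1] (mod int q)"
    using cong_wnorm[OF \<alpha>q] \<beta> unfolding qnorm_eq_wnorm by (rule cong_trans)
  moreover have "[qnorm D \<alpha> = 1] (mod int (N div q))"
    using cong_wnorm[OF \<alpha>M] unfolding qnorm_eq_wnorm by (simp add: wnorm_def)
  ultimately have "[qnorm D \<alpha> = 1] (mod int q * int (N div q))"
    using cop_q by (intro coprime_cong_mult) simp_all
  moreover have "0 < N" using sq by (auto intro: gr0I)
  ultimately have "\<alpha> \<in> G_set D N"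
    using q(2) by (auto simp: G_set_def \<alpha>_def wreduce_def simp flip: of_nat_mult)
  with \<alpha>q show ?thesis using that by blast
qed

lemma G_set_exponent_iff:
  assumes sq: "squarefree N" and odd: "odd N" and cop: "coprime (int N) D"
  shows "(\<forall>\<alpha>\<in>G_set D N. qcong N (qpow D \<alpha> e) (1, 0)) \<longleftrightarrow>
         (\<forall>q. prime q \<and> q dvd N \<longrightarrow> nat (FD D q) dvd e)"
proof
  assume exp: "\<forall>\<alpha>\<in>G_set D N. qcong N (qpow D \<alpha> e) (1, 0)"
  show "\<forall>q. prime q \<and> q dvd N \<longrightarrow> nat (FD D q) dvd e"
  proof (intro allI impI, elim conjE)
    fix q assume q: "prime q" "q dvd N"
    obtain \<beta> where \<beta>: "[qnorm D \<beta> = 1] (mod int q)"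
      and \<beta>_ord: "\<And>e. qcong q (qpow D \<beta> e) (1, 0) \<Longrightarrow> nat (FD D q) dvd e"
      using qnorm_one_element_of_order_FD[OF q(1) prime_factor_odd_coprime[OF odd cop q]] by blast
    obtain \<alpha> where "\<alpha> \<in> G_set D N" and \<alpha>q: "qcong q \<alpha> \<beta>"
      by (rule G_set_lift[OF sq q \<beta>])
    then have "qcong q (qpow D \<alpha> e) (1, 0)" using exp q(2) qcong_dvd_modulus by blast
    then have "qcong q (qpow D \<beta> e) (1, 0)"
      using qcong_wpow[OF qcong_sym[OF \<alpha>q]] unfolding qpow_eq_wpow by (blast intro: qcong_trans)
    then show "nat (FD D q) dvd e" by (rule \<beta>_ord)
  qed
next
  assume F: "\<forall>q. prime q \<and> q dvd N \<longrightarrow> nat (FD D q) dvd e"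
  show "\<forall>\<alpha>\<in>G_set D N. qcong N (qpow D \<alpha> e) (1, 0)"
  proof
    fix \<alpha> assume "\<alpha> \<in> G_set D N"
    then have norm: "[qnorm D \<alpha> = 1] (mod int N)" by (auto simp: G_set_def)
    show "qcong N (qpow D \<alpha> e) (1, 0)"
    proof (rule qcong_squarefree[OF sq])
      fix q assume q: "prime q" "q dvd N"
      obtain k where k: "e = nat (FD D q) * k" using F q by blast
      have "[qnorm D \<alpha> = 1] (mod int q)" using norm q(2) by (simp add: cong_dvd_modulus)
      then have "qcong q (qpow D \<alpha> (nat (FD D q))) (1, 0)"
        by (rule qpow_FD_odd_prime[OF q(1) prime_factor_odd_coprime[OF odd cop q]])
      then show "qcong q (qpow D \<alpha> e) (1, 0)" unfolding k qpow_eq_wpow by (rule qcong_wpow_1_mult)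
    qed
  qed
qed

theorem theorem4p3:
  fixes D :: int and N :: nat
  assumes "squarefree D"
    and "N > 1" and "odd N" and "squarefree N" and "\<not> prime N"
    and "coprime (int N) D"
  shows "G_carmichael D N \<longleftrightarrow> (\<forall>q::nat. prime q \<and> q dvd N \<longrightarrow> FD D q dvd FD D N)"
proof -
  have "FD D q dvd FD D N \<longleftrightarrow> nat (FD D q) dvd nat (FD D N)" if "prime q" for q
    using FD_pos[where D = D, OF prime_gt_1_nat[OF that]] FD_pos[where D = D, OF assms(2)]
    by (simp add: nat_dvd_iff)
  then show ?thesis
    using G_set_exponent_iff[OF assms(4,3,6), of "nat (FD D N)"] assms(2,3,5,6)
    by (auto simp: G_carmichael_def)
qed

end
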